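(* Let $A$ be an arbitrary modal algebra and let $S$ be a countable subset of $\mathcal{P}(A)$. Then the map $f:A\to K(\bar J_S(A))$ given by $f(x)=\{F\in Q_S(A)\mid x\in F\}$ is an injective homomorphism of modal algebras, and for every $X\in S$ such that $\bigwedge X$ exists in $A$, $f(\bigwedge X)=\bigcap_{x\in X}f(x)$.
   Context: A modal algebra is a structure $\langle A;\lor,\land,-,\Box,0,1\rangle$ whose reduct is a Boolean algebra and $\Box$ is an arbitrary unary operation. A homomorphism of modal algebras is a Boolean homomorphism commuting with $\Box$. A prime filter is a proper filter $F$ with $x\lor y\in F\Rightarrow x\in F$ or $y\in F$. For $S\subseteq\mathcal{P}(A)$, a Q-filter for $S$ is a prime filter $F$ such that for every $X\in S$, if $\bigwedge X$ exists in $A$ and $X\subseteq F$ then $\bigwedge X\in F$; $Q_S(A)$ is the set of these. For a neighborhood frame $Z=\langle C,\mathcal{V}\rangle$ ($C\neq\emptyset$, $\mathcal{V}:C\to\mathcal{P}(\mathcal{P}(C))$), $K(Z)=\langle\mathcal{P}(C);\cup,\cap,C\setminus-,\Box_Z,\emptyset,C\rangle$ with $\Box_Z X=\{c\mid X\in\mathcal{V}(c)\}$. $\bar J_S(A)=\langle Q_S(A),\bar{\mathcal{V}}_A\rangle$ with $\bar{\mathcal{V}}_A(F)=\{\{G\in Q_S(A)\mid x\in G\}\mid x\in A,\ \Box x\in F\}$. *)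

theory Defs
  imports Main "HOL-Library.Countable_Set"
begin

text \<open>A modal algebra is modelled as a Boolean algebra type 'a together with an
arbitrary unary operation box on it.\<close>

definition is_filter :: "'a::boolean_algebra set \<Rightarrow> bool" where
  "is_filter F \<longleftrightarrow> top \<in> F \<and> (\<forall>x\<in>F. \<forall>y. x \<le> y \<longrightarrow> y \<in> F) \<and>
     (\<forall>x\<in>F. \<forall>y\<in>F. inf x y \<in> F)"

definition is_prime_filter :: "'a::boolean_algebra set \<Rightarrow> bool" where
  "is_prime_filter F \<longleftrightarrow> is_filter F \<and> F \<noteq> UNIV \<and>
     (\<forall>x y. sup x y \<in> F \<longrightarrow> x \<in> F \<or> y \<in> F)"

definition is_meet :: "'a::boolean_algebra set \<Rightarrow> 'a \<Rightarrow> bool" where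
  "is_meet X m \<longleftrightarrow> (\<forall>x\<in>X. m \<le> x) \<and> (\<forall>l. (\<forall>x\<in>X. l \<le> x) \<longrightarrow> l \<le> m)"

definition Q_filters :: "'a::boolean_algebra set set \<Rightarrow> 'a set set" where
  "Q_filters S = {F. is_prime_filter F \<and>
     (\<forall>X\<in>S. \<forall>m. is_meet X m \<and> X \<subseteq> F \<longrightarrow> m \<in> F)}"

definition Jbar_nbhd :: "('a::boolean_algebra \<Rightarrow> 'a) \<Rightarrow> 'a set set \<Rightarrow> 'a set \<Rightarrow> 'a set set set" where
  "Jbar_nbhd box S F = {{G \<in> Q_filters S. x \<in> G} | x. box x \<in> F}"

text \<open>Box operation of the complex algebra K(Z) of a neighbourhood frame Z = (C, V).\<close>
definition K_box :: "'c set \<Rightarrow> ('c \<Rightarrow> 'c set set) \<Rightarrow> 'c set \<Rightarrow> 'c set" where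
  "K_box C V X = {c \<in> C. X \<in> V c}"

text \<open>f is a homomorphism of modal algebras from (A, box) into K(C, V),
  whose carrier is the powerset of C.\<close>
definition modal_hom_to_K ::
  "('a::boolean_algebra \<Rightarrow> 'a) \<Rightarrow> 'c set \<Rightarrow> ('c \<Rightarrow> 'c set set) \<Rightarrow> ('a \<Rightarrow> 'c set) \<Rightarrow> bool" where
  "modal_hom_to_K box C V f \<longleftrightarrow>
     (\<forall>x. f x \<subseteq> C) \<and>
     (\<forall>x y. f (sup x y) = f x \<union> f y) \<and>
     (\<forall>x y. f (inf x y) = f x \<inter> f y) \<and>
     (\<forall>x. f (- x) = C - f x) \<and>
     f bot = {} \<and> f top = C \<and>
     (\<forall>x. f (box x) = K_box C V (f x))"

end

theory Submission
  imports Defs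
begin

text \<open>The map is the Stone representation restricted to Q-filters, so it preserves the
  Boolean operations, and it sends meets in S to intersections because Q-filters are closed
  under them. The content is injectivity, i.e. that any nonzero a lies in some Q-filter
  (a Rasiowa--Sikorski argument): enumerate S as X_0, X_1, ... and shrink a step by step to
  nonzero a = a_0 \<ge> a_1 \<ge> ... where a_(n+1) lies below the meet of X_n or below the
  complement of some element of X_n. A prime filter extending the filter generated by the
  a_n then contains the meet of X_n whenever it contains all of X_n. Injectivity also makes
  the box commute, since the neighbourhoods of the frame are images of elements.\<close>

lemma is_filter_top: "is_filter F \<Longrightarrow> top \<in> F"
  unfolding is_filter_def by blast

lemma is_filter_mono: "is_filter F \<Longrightarrow> x \<in> F \<Longrightarrow> x \<le> y \<Longrightarrow> y \<in> F"
  unfolding is_filter_def by blast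

lemma is_filter_inf: "is_filter F \<Longrightarrow> x \<in> F \<Longrightarrow> y \<in> F \<Longrightarrow> inf x y \<in> F"
  unfolding is_filter_def by blast

lemma is_prime_filter_bot: "is_prime_filter F \<Longrightarrow> bot \<notin> F"
  unfolding is_prime_filter_def is_filter_def by (metis UNIV_eq_I bot.extremum)

lemma is_prime_filter_top: "is_prime_filter F \<Longrightarrow> top \<in> F"
  unfolding is_prime_filter_def using is_filter_top by blast

lemma is_prime_filter_mono: "is_prime_filter F \<Longrightarrow> x \<in> F \<Longrightarrow> x \<le> y \<Longrightarrow> y \<in> F"
  unfolding is_prime_filter_def using is_filter_mono by blast

lemma is_prime_filter_inf_iff: "is_prime_filter F \<Longrightarrow> inf x y \<in> F \<longleftrightarrow> x \<in> F \<and> y \<in> F"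
  unfolding is_prime_filter_def is_filter_def by (meson inf.cobounded1 inf.cobounded2)

lemma is_prime_filter_sup_iff: "is_prime_filter F \<Longrightarrow> sup x y \<in> F \<longleftrightarrow> x \<in> F \<or> y \<in> F"
  unfolding is_prime_filter_def by (meson is_filter_mono sup.cobounded1 sup.cobounded2)

lemma is_prime_filter_compl_iff: "is_prime_filter F \<Longrightarrow> - x \<in> F \<longleftrightarrow> x \<notin> F"
proof -
  assume F: "is_prime_filter F"
  have "x \<in> F \<or> - x \<in> F"
    using is_prime_filter_top[OF F] is_prime_filter_sup_iff[OF F, of x "- x"] by simp
  moreover have "\<not> (x \<in> F \<and> - x \<in> F)"
    using is_prime_filter_inf_iff[OF F, of x "- x"] is_prime_filter_bot[OF F] by simp
  ultimately show ?thesis by blast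
qed

lemma Q_filters_prime: "F \<in> Q_filters S \<Longrightarrow> is_prime_filter F"
  unfolding Q_filters_def by blast

lemma is_filter_Union_chain:
  assumes "C \<noteq> {}" "\<And>F. F \<in> C \<Longrightarrow> is_filter F" "\<And>F G. F \<in> C \<Longrightarrow> G \<in> C \<Longrightarrow> F \<subseteq> G \<or> G \<subseteq> F"
  shows "is_filter (\<Union>C)"
  unfolding is_filter_def
proof (intro conjI ballI allI impI)
  show "top \<in> \<Union>C" using assms(1,2) is_filter_top by blast
next
  fix x y assume "x \<in> \<Union>C" "x \<le> y"
  then show "y \<in> \<Union>C" using assms(2) is_filter_mono by blast
next
  fix x y assume "x \<in> \<Union>C" "y \<in> \<Union>C"
  then obtain F G where "F \<in> C" "G \<in> C" "x \<in> F" "y \<in> G" by blast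
  then show "inf x y \<in> \<Union>C" using assms(2,3) is_filter_inf by (metis UnionI subsetD)
qed

lemma is_filter_adjoin:
  assumes F: "is_filter F"
  shows "is_filter {z. \<exists>w\<in>F. inf w x \<le> z}"
  unfolding is_filter_def
proof (intro conjI ballI allI impI)
  show "top \<in> {z. \<exists>w\<in>F. inf w x \<le> z}" using is_filter_top[OF F] by auto
next
  fix a b assume "a \<in> {z. \<exists>w\<in>F. inf w x \<le> z}" "a \<le> b"
  then show "b \<in> {z. \<exists>w\<in>F. inf w x \<le> z}" by (blast intro: order_trans)
next
  fix a b assume "a \<in> {z. \<exists>w\<in>F. inf w x \<le> z}" "b \<in> {z. \<exists>w\<in>F. inf w x \<le> z}"
  then obtain w v where "w \<in> F" "inf w x \<le> a" "v \<in> F" "inf v x \<le> b" by blast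
  moreover have "inf (inf w v) x \<le> inf w x" "inf (inf w v) x \<le> inf v x"
    by (simp_all add: inf.coboundedI1 inf_mono)
  ultimately show "inf a b \<in> {z. \<exists>w\<in>F. inf w x \<le> z}"
    using is_filter_inf[OF F] by (blast intro: le_infI order_trans)
qed

text \<open>Maximality is only needed for the extensions of F by a single element.\<close>
lemma maximal_proper_filter_is_prime:
  assumes F: "is_filter F" "bot \<notin> F"
    and max: "\<And>x. bot \<notin> {z. \<exists>w\<in>F. inf w x \<le> z} \<Longrightarrow> {z. \<exists>w\<in>F. inf w x \<le> z} = F"
  shows "is_prime_filter F"
proof -
  have ultra: "x \<in> F \<or> - x \<in> F" for x
  proof (cases "bot \<in> {z. \<exists>w\<in>F. inf w x \<le> z}")
    case True
    then obtain w where "w \<in> F" "inf w x = bot" by (auto simp: bot_unique)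
    then show ?thesis using F(1) is_filter_mono by (metis inf_shunt)
  next
    case False
    have "x \<in> {z. \<exists>w\<in>F. inf w x \<le> z}" using is_filter_top[OF F(1)] by force
    then show ?thesis using max[OF False] by blast
  qed
  have "x \<in> F \<or> y \<in> F" if "sup x y \<in> F" for x y
  proof (rule ccontr)
    assume "\<not> (x \<in> F \<or> y \<in> F)"
    then have "inf (inf (- x) (- y)) (sup x y) \<in> F" using ultra that F(1) is_filter_inf by metis
    moreover have "inf (inf (- x) (- y)) (sup x y) = bot" by (simp add: inf_sup_distrib1 inf_shunt)
    ultimately show False using F(2) by simp
  qed
  then show ?thesis unfolding is_prime_filter_def using F by blast
qed

lemma proper_filter_extends_to_prime_filter:
  assumes G: "is_filter G" "bot \<notin> G"
  obtains U where "is_prime_filter U" "G \<subseteq> U"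
proof -
  define P where "P = {F. is_filter F \<and> bot \<notin> F \<and> G \<subseteq> F}"
  have "\<exists>U\<in>P. \<forall>F\<in>C. F \<subseteq> U" if C: "C \<in> chains P" for C
  proof (cases "C = {}")
    case True then show ?thesis using G unfolding P_def by blast
  next
    case False
    have CP: "C \<subseteq> P" and chain: "\<And>F H. F \<in> C \<Longrightarrow> H \<in> C \<Longrightarrow> F \<subseteq> H \<or> H \<subseteq> F"
      using C unfolding chains_def chain_subset_def by blast+
    have "is_filter (\<Union>C)"
    proof (rule is_filter_Union_chain[OF False _ chain])
      show "F \<in> C \<Longrightarrow> is_filter F" for F using CP unfolding P_def by blast
    qed
    moreover have "bot \<notin> \<Union>C" "G \<subseteq> \<Union>C" using CP False unfolding P_def by blast+
    ultimately show ?thesis unfolding P_def by blast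
  qed
  then have "\<exists>M\<in>P. \<forall>F\<in>P. M \<subseteq> F \<longrightarrow> F = M" by (intro Zorn_Lemma2) blast
  then obtain M where M: "M \<in> P" and max: "\<And>F. F \<in> P \<Longrightarrow> M \<subseteq> F \<Longrightarrow> F = M"
    by blast
  have M_filter: "is_filter M" "bot \<notin> M" "G \<subseteq> M" using M unfolding P_def by blast+
  have "is_prime_filter M"
  proof (rule maximal_proper_filter_is_prime[OF M_filter(1,2)])
    fix x assume proper: "bot \<notin> {z. \<exists>w\<in>M. inf w x \<le> z}"
    have "M \<subseteq> {z. \<exists>w\<in>M. inf w x \<le> z}" by (auto intro: order_trans[OF inf_le1])
    moreover from this have "{z. \<exists>w\<in>M. inf w x \<le> z} \<in> P"
      using proper is_filter_adjoin[OF M_filter(1)] M_filter(3) unfolding P_def by blast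
    ultimately show "{z. \<exists>w\<in>M. inf w x \<le> z} = M" using max by blast
  qed
  then show thesis using that M_filter(3) by blast
qed

lemma is_filter_upward_closure_decreasing:
  assumes "\<And>n. s (Suc n) \<le> s n"
  shows "is_filter {y. \<exists>n. s n \<le> y}"
  unfolding is_filter_def
proof (intro conjI ballI allI impI)
  show "top \<in> {y. \<exists>n. s n \<le> y}" by simp
next
  fix x y assume "x \<in> {y. \<exists>n. s n \<le> y}" "x \<le> y"
  then show "y \<in> {y. \<exists>n. s n \<le> y}" by (blast intro: order_trans)
next
  fix x y assume "x \<in> {y. \<exists>n. s n \<le> y}" "y \<in> {y. \<exists>n. s n \<le> y}"
  then obtain n k where "s n \<le> x" "s k \<le> y" by blast
  moreover have "s (max n k) \<le> s n" "s (max n k) \<le> s k"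
    using lift_Suc_antimono_le[of s, OF assms] by simp_all
  ultimately have "s (max n k) \<le> inf x y" by (blast intro: le_infI order_trans)
  then show "inf x y \<in> {y. \<exists>n. s n \<le> y}" by blast
qed

text \<open>One step of the Rasiowa--Sikorski construction: below a nonzero a there is a nonzero b
  that decides whether a filter containing it may contain all of X without the meet of X.\<close>
lemma exists_refinement_deciding_meet:
  fixes a :: "'a::boolean_algebra"
  assumes "a \<noteq> bot"
  shows "\<exists>b. b \<le> a \<and> b \<noteq> bot \<and> (\<forall>m. is_meet X m \<longrightarrow> b \<le> m \<or> (\<exists>x\<in>X. b \<le> - x))"
proof (cases "\<exists>m. is_meet X m \<and> \<not> a \<le> m")
  case True
  then obtain m where "is_meet X m" "\<not> a \<le> m" by blast
  then obtain x where "x \<in> X" "\<not> a \<le> x" unfolding is_meet_def by blast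
  then have "inf a (- x) \<noteq> bot" "\<exists>y\<in>X. inf a (- x) \<le> - y"
    by (auto simp: inf_shunt intro!: bexI[of _ x])
  moreover have "inf a (- x) \<le> a" by simp
  ultimately show ?thesis by blast
next
  case False
  then show ?thesis using assms by blast
qed

lemma exists_Q_filter:
  fixes S :: "'a::boolean_algebra set set"
  assumes S: "countable S" and a: "a \<noteq> bot"
  shows "\<exists>F\<in>Q_filters S. a \<in> F"
proof -
  obtain r :: "'a set \<Rightarrow> 'a \<Rightarrow> 'a" where r: "\<And>X a. a \<noteq> bot \<Longrightarrow> r X a \<le> a \<and> r X a \<noteq> bot \<and>
      (\<forall>m. is_meet X m \<longrightarrow> r X a \<le> m \<or> (\<exists>x\<in>X. r X a \<le> - x))"
    using exists_refinement_deciding_meet by metis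
  define s where "s = rec_nat a (\<lambda>n. r (from_nat_into S n))"
  have s_0: "s 0 = a" unfolding s_def by simp
  have s_Suc: "s (Suc n) = r (from_nat_into S n) (s n)" for n unfolding s_def by simp
  have s_nonzero: "s n \<noteq> bot" for n by (induction n) (auto simp: s_0 s_Suc r a)
  define G where "G = {y. \<exists>n. s n \<le> y}"
  have "is_filter G" unfolding G_def
    using r s_nonzero s_Suc by (intro is_filter_upward_closure_decreasing) simp
  moreover have "bot \<notin> G" unfolding G_def using s_nonzero by (auto simp: bot_unique)
  ultimately obtain U where U: "is_prime_filter U" "G \<subseteq> U"
    using proper_filter_extends_to_prime_filter by blast
  have "m \<in> U" if "X \<in> S" "is_meet X m" "X \<subseteq> U" for X m
  proof -
    obtain n where X: "X = from_nat_into S n"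
      using from_nat_into_surj[OF S \<open>X \<in> S\<close>] by blast
    have "s (Suc n) \<in> U" using U(2) unfolding G_def by blast
    moreover have "s (Suc n) \<le> m \<or> (\<exists>x\<in>X. s (Suc n) \<le> - x)"
      using r[OF s_nonzero] that(2) unfolding X s_Suc by blast
    ultimately show "m \<in> U"
      using that(3) is_prime_filter_mono[OF U(1)] is_prime_filter_compl_iff[OF U(1)] by blast
  qed
  then have "U \<in> Q_filters S" unfolding Q_filters_def using U(1) by blast
  moreover have "a \<in> U" using U(2) s_0 unfolding G_def by blast
  ultimately show ?thesis by blast
qed

lemma Q_filters_separate:
  assumes "countable S" "\<not> x \<le> y"
  shows "\<exists>F\<in>Q_filters S. x \<in> F \<and> y \<notin> F"
proof -
  have "inf x (- y) \<noteq> bot" using assms(2) by (simp add: inf_shunt)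
  then obtain F where "F \<in> Q_filters S" "inf x (- y) \<in> F" using exists_Q_filter[OF assms(1)] by blast
  moreover note F = Q_filters_prime[OF \<open>F \<in> Q_filters S\<close>]
  ultimately show ?thesis
    using is_prime_filter_inf_iff[OF F] is_prime_filter_compl_iff[OF F] by blast
qed

lemma inj_Q_filters_repr:
  assumes "countable S"
  shows "inj (\<lambda>x. {F \<in> Q_filters S. x \<in> F})"
proof (rule injI)
  fix x y assume eq: "{F \<in> Q_filters S. x \<in> F} = {F \<in> Q_filters S. y \<in> F}"
  have "a \<le> b" if "{F \<in> Q_filters S. a \<in> F} = {F \<in> Q_filters S. b \<in> F}" for a b
  proof (rule ccontr)
    assume "\<not> a \<le> b"
    then obtain F where "F \<in> Q_filters S" "a \<in> F" "b \<notin> F"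
      using Q_filters_separate[OF assms] by blast
    then show False using that by blast
  qed
  then show "x = y" using eq by (metis order.antisym)
qed

lemma Q_filters_repr_box:
  assumes "inj (\<lambda>x. {F \<in> Q_filters S. x \<in> F})"
  shows "{F \<in> Q_filters S. box x \<in> F} = K_box (Q_filters S) (Jbar_nbhd box S) {F \<in> Q_filters S. x \<in> F}"
  using injD[OF assms] unfolding K_box_def Jbar_nbhd_def by blast

lemma Q_filters_repr_meet:
  assumes "X \<in> S" "is_meet X m"
  shows "{F \<in> Q_filters S. m \<in> F} = Q_filters S \<inter> (\<Inter>x\<in>X. {F \<in> Q_filters S. x \<in> F})"
  using assms is_prime_filter_mono unfolding Q_filters_def is_meet_def by blast

lemma modal_hom_Q_filters_repr:
  assumes inj: "inj (\<lambda>x. {F \<in> Q_filters S. x \<in> F})"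
  shows "modal_hom_to_K box (Q_filters S) (Jbar_nbhd box S) (\<lambda>x. {F \<in> Q_filters S. x \<in> F})"
  unfolding modal_hom_to_K_def
proof (intro conjI allI)
  fix x y
  show "{F \<in> Q_filters S. sup x y \<in> F} = {F \<in> Q_filters S. x \<in> F} \<union> {F \<in> Q_filters S. y \<in> F}"
    using is_prime_filter_sup_iff[OF Q_filters_prime] by blast
  show "{F \<in> Q_filters S. inf x y \<in> F} = {F \<in> Q_filters S. x \<in> F} \<inter> {F \<in> Q_filters S. y \<in> F}"
    using is_prime_filter_inf_iff[OF Q_filters_prime] by blast
  show "{F \<in> Q_filters S. - x \<in> F} = Q_filters S - {F \<in> Q_filters S. x \<in> F}"
    using is_prime_filter_compl_iff[OF Q_filters_prime] by blast
  show "{F \<in> Q_filters S. bot \<in> F} = {}" using is_prime_filter_bot[OF Q_filters_prime] by blast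
  show "{F \<in> Q_filters S. top \<in> F} = Q_filters S" using is_prime_filter_top[OF Q_filters_prime] by blast
  show "{F \<in> Q_filters S. box x \<in> F} =
    K_box (Q_filters S) (Jbar_nbhd box S) {F \<in> Q_filters S. x \<in> F}"
    using Q_filters_repr_box[OF inj] .
qed blast

theorem mainTheorem7:
  fixes box :: "'a::boolean_algebra \<Rightarrow> 'a" and S :: "'a set set"
  assumes "countable S"
  defines "f \<equiv> (\<lambda>x. {F \<in> Q_filters S. x \<in> F})"
  shows "modal_hom_to_K box (Q_filters S) (Jbar_nbhd box S) f \<and> inj f \<and>
         (\<forall>X\<in>S. \<forall>m. is_meet X m \<longrightarrow> f m = Q_filters S \<inter> (\<Inter>x\<in>X. f x))"
proof -
  have inj: "inj f" unfolding f_def using inj_Q_filters_repr[OF assms(1)] .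
  then have "modal_hom_to_K box (Q_filters S) (Jbar_nbhd box S) f"
    unfolding f_def by (rule modal_hom_Q_filters_repr)
  moreover have "\<forall>X\<in>S. \<forall>m. is_meet X m \<longrightarrow> f m = Q_filters S \<inter> (\<Inter>x\<in>X. f x)"
    unfolding f_def using Q_filters_repr_meet by blast
  ultimately show ?thesis using inj by blast
qed

end
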